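(* Let $\gamma\in(0,1)$ and $c\ge 0$. Define the deterministic sequence $\bar v^0=0$ and, for $n\ge 1$, $$\hat v^n = c+\gamma \bar v^{n-1},\qquad \bar v^n=\Big(1-\tfrac1n\Big)\bar v^{n-1}+\tfrac1n \hat v^n .$$ Let $b=\frac{\gamma^2+\gamma-1}{\gamma}$. Then for all $n=1,2,\dots$, $$\bar v^n\ \le\ \frac{c}{1-\gamma}\Big[1-b\,n^{-(1-\gamma)}-\frac{1-\gamma}{\gamma}\cdot\frac1n\Big].$$
   Context: This is approximate value iteration for a single-state, single-action problem with deterministic one-period reward $c$, discount factor $\gamma$, initial approximation $0$, and stepsize $\alpha_{n-1}=1/n$. *)

theory Defs
  imports "HOL-Analysis.Analysis"
begin

fun vbar :: "real \<Rightarrow> real \<Rightarrow> nat \<Rightarrow> real" where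
  "vbar c g 0 = 0"
| "vbar c g (Suc m) =
     (let n = real (Suc m); vprev = vbar c g m; vhat = c + g * vprev
      in (1 - 1 / n) * vprev + (1 / n) * vhat)"

definition vhat :: "real \<Rightarrow> real \<Rightarrow> nat \<Rightarrow> real" where
  "vhat c g n = c + g * vbar c g (n - 1)"

end

theory Submission
  imports Defs
begin

text \<open>The gap \<open>c/(1-\<gamma>) - vbar n\<close> to the fixed point contracts exactly by the factor
  \<open>1 - (1-\<gamma>)/n\<close> in step \<open>n\<close>. Writing the claimed bound as
  \<open>vbar n \<le> c/(1-\<gamma>) (1 - avi_error \<gamma> n)\<close>, it therefore suffices that \<open>avi_error \<gamma> 1 = \<gamma>\<close>
  (equality at \<open>n = 1\<close>) and that \<open>avi_error \<gamma>\<close> contracts at least as fast as the gap. The latter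
  follows from the Bernoulli-type bounds \<open>x/(x+a) \<le> (x/(x+1))\<^sup>a \<le> 1 - a/(x+1)\<close> for \<open>a = 1-\<gamma>\<close>;
  the possibly negative coefficient \<open>(\<gamma>\<^sup>2+\<gamma>-1)/\<gamma> = \<gamma> - a/\<gamma>\<close> is what forces the lower bound.\<close>

lemma powr_le_affine:
  fixes z a :: real
  assumes "0 < z" "0 \<le> a" "a \<le> 1"
  shows "z powr a \<le> 1 + a * (z - 1)"
  using Youngs_inequality_0[of a "1 - a" z 1] assms by (simp add: algebra_simps)

lemma powr_ratio_upper:
  fixes x a :: real
  assumes "0 < x" "0 \<le> a" "a \<le> 1"
  shows "(x / (x + 1)) powr a \<le> 1 - a / (x + 1)"
proof -
  have "(x / (x + 1)) powr a \<le> 1 + a * (x / (x + 1) - 1)"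
    using assms by (intro powr_le_affine) auto
  also have "x / (x + 1) - 1 = - 1 / (x + 1)"
    using assms by (simp add: field_simps)
  finally show ?thesis by simp
qed

lemma powr_ratio_lower:
  fixes x a :: real
  assumes "0 < x" "0 \<le> a" "a \<le> 1"
  shows "x / (x + a) \<le> (x / (x + 1)) powr a"
proof -
  have "((x + 1) / x) powr a \<le> 1 + a * ((x + 1) / x - 1)"
    using assms by (intro powr_le_affine) auto
  also have "\<dots> = (x + a) / x"
    using assms by (simp add: field_simps)
  finally have "((x + 1) / x) powr a \<le> (x + a) / x" .
  then have "1 / ((x + a) / x) \<le> 1 / ((x + 1) / x) powr a"
    using assms by (intro divide_left_mono) auto
  then show ?thesis
    using assms by (simp add: powr_divide)
qed

definition avi_error :: "real \<Rightarrow> real \<Rightarrow> real" where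
  "avi_error g x = (g\<^sup>2 + g - 1) / g * x powr (-(1 - g)) + (1 - g) / g * (1 / x)"

lemma avi_error_one: "g \<noteq> 0 \<Longrightarrow> avi_error g 1 = g"
  by (simp add: avi_error_def field_simps power2_eq_square)

lemma avi_error_step:
  fixes g x :: real
  assumes g: "0 < g" "g < 1" and x: "1 \<le> x"
  shows "avi_error g (x + 1) \<le> avi_error g x * (1 - (1 - g) / (x + 1))"
proof -
  define a where "a = 1 - g"
  define b where "b = (g\<^sup>2 + g - 1) / g"
  define p where "p = x powr (-a)"
  define r where "r = (x / (x + 1)) powr a"
  define D where "D = 1 - a / (x + 1) - r"
  have a: "0 < a" "a < 1" and x0: "0 < x"
    using g x by (auto simp: a_def)
  have b: "b = g - a / g"
    using g by (simp add: a_def b_def field_simps power2_eq_square)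
  have p: "0 < p" "a * p \<le> 1"
    using a x ge_one_powr_ge_zero[of x a] mult_le_one[of a p]
    by (auto simp: p_def powr_minus_divide)
  have D0: "0 \<le> D"
    using powr_ratio_upper[of x a] x0 a by (simp add: D_def r_def)
  have "D \<le> 1 - a / (x + 1) - x / (x + a)"
    using powr_ratio_lower[of x a] x0 a by (simp add: D_def r_def)
  also have "\<dots> = a * g / ((x + 1) * (x + a))"
    using x0 a by (simp add: a_def field_simps)
  finally have D_le: "D \<le> a * g / ((x + 1) * (x + a))" .
  have error_x: "avi_error g x = b * p + a / g * (1 / x)"
    unfolding avi_error_def a_def b_def p_def ..
  have "(x + 1) powr (-a) = p * r"
    using x0 by (simp add: p_def r_def powr_minus_divide powr_divide field_simps)
  then have error_x1: "avi_error g (x + 1) = b * (p * r) + a / g * (1 / (x + 1))"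
    unfolding avi_error_def a_def[symmetric] b_def[symmetric] by simp
  have "avi_error g x * (1 - a / (x + 1)) - avi_error g (x + 1)
        = b * (p * D) + (a / g * (1 / x) * (1 - a / (x + 1)) - a / g * (1 / (x + 1)))"
    unfolding error_x error_x1 D_def by (simp add: algebra_simps)
  also have "\<dots> = b * (p * D) + a / (x * (x + 1))"
    using x0 g by (simp add: a_def divide_simps) (simp add: algebra_simps)
  finally have gap: "avi_error g x * (1 - a / (x + 1)) - avi_error g (x + 1)
                     = b * (p * D) + a / (x * (x + 1))" .
  have "(a / g) * (p * D) \<le> (a / g) * (p * (a * g / ((x + 1) * (x + a))))"
    using D_le p a g by (intro mult_left_mono) auto
  also have "\<dots> = (a * p) * a / ((x + 1) * (x + a))"
    using g by (simp add: field_simps)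
  also have "\<dots> \<le> a / ((x + 1) * x)"
    using p a x0 by (intro frac_le mult_mono) (auto simp: mult.commute)
  finally have "(a / g) * (p * D) \<le> a / (x * (x + 1))"
    by (simp add: mult.commute)
  moreover have "- (a / g) * (p * D) \<le> b * (p * D)"
    using b g p D0 by (intro mult_right_mono) auto
  ultimately show ?thesis
    using gap by (simp add: a_def)
qed

lemma vbar_gap_Suc:
  assumes "g \<noteq> 1"
  shows "c / (1 - g) - vbar c g (Suc m)
         = (c / (1 - g) - vbar c g m) * (1 - (1 - g) / real (Suc m))"
proof -
  have "vbar c g (Suc m) = vbar c g m * (1 - (1 - g) / real (Suc m)) + c / real (Suc m)"
    by (simp add: Let_def algebra_simps add_divide_distrib diff_divide_distrib)
  moreover have "c / (1 - g) * (1 - (1 - (1 - g) / real (Suc m))) = c / real (Suc m)"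
    using assms by simp
  ultimately show ?thesis
    by (simp only: right_diff_distrib left_diff_distrib mult_1_right)
qed

lemma vbar_gap_lower:
  fixes c g :: real
  assumes "0 < g" "g < 1" "0 \<le> c" "1 \<le> n"
  shows "c / (1 - g) * avi_error g (real n) \<le> c / (1 - g) - vbar c g n"
  using assms(4)
proof (induction n rule: dec_induct)
  case base
  have "c / (1 - g) * g = c / (1 - g) - c"
    using assms by (simp add: field_simps)
  then show ?case
    using assms by (simp add: avi_error_one)
next
  case (step m)
  have "0 \<le> c / (1 - g)" "0 \<le> 1 - (1 - g) / real (Suc m)"
    using assms by (auto simp: field_simps)
  moreover have "avi_error g (real m + 1) \<le> avi_error g (real m) * (1 - (1 - g) / real (Suc m))"
    using avi_error_step[of g "real m"] assms step.hyps by (simp add: add.commute)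
  ultimately have "c / (1 - g) * avi_error g (real m + 1)
             \<le> c / (1 - g) * (avi_error g (real m) * (1 - (1 - g) / real (Suc m)))"
    by (intro mult_left_mono)
  also have "\<dots> \<le> (c / (1 - g) - vbar c g m) * (1 - (1 - g) / real (Suc m))"
    using mult_right_mono[OF step.IH \<open>0 \<le> 1 - (1 - g) / real (Suc m)\<close>]
    by (simp only: mult.assoc)
  also have "\<dots> = c / (1 - g) - vbar c g (Suc m)"
    using assms by (simp only: vbar_gap_Suc)
  finally show ?case
    by (simp only: of_nat_Suc add.commute[of 1 "real m"])
qed

theorem theorem2:
  fixes c \<gamma> :: real and n :: nat
  assumes "0 < \<gamma>" and "\<gamma> < 1" and "0 \<le> c" and "1 \<le> n"
  shows "vbar c \<gamma> n \<le> c / (1 - \<gamma>) *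
           (1 - ((\<gamma>^2 + \<gamma> - 1) / \<gamma>) * real n powr (-(1 - \<gamma>))
              - ((1 - \<gamma>) / \<gamma>) * (1 / real n))"
  using vbar_gap_lower[OF assms] by (simp add: avi_error_def algebra_simps)

end
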